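(* Let $s,t$ be real numbers with $t\ge s>0$, and define $K_0=1$, $K_1=t$, $K_2=t^2$, and $K_n = tK_{n-1}+s^2K_{n-2}$ for $n\ge 3$. Then $K_n \ge M_n$ for every integer $n\ge 0$.
   Context: For a real number $s$, a positive integer $n$ and a set $P \subseteq \mathbb{R}$, $\mathcal{G}_s^{n\times n}(P)$ denotes the set of all $n\times n$ real upper Hessenberg matrices $A=(a_{ij})$ with $a_{i+1,i} = s$ for $1\le i\le n-1$, $a_{ij}=0$ for $i > j+1$, and $a_{ij}\in P$ for all $i \le j$. For $n\ge 1$, $M_n$ is the maximum of $|\det A|$ over $A\in\mathcal{G}_s^{n\times n}([0,t])$, and $M_0 := 1$. *)

theory Defs
  imports Jordan_Normal_Form.Determinant
begin

definition hess_set :: "real \<Rightarrow> nat \<Rightarrow> real set \<Rightarrow> real mat set" where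
  "hess_set s n P = {A. A \<in> carrier_mat n n \<and>
     (\<forall>i<n. \<forall>j<n. (i = j + 1 \<longrightarrow> A $$ (i, j) = s) \<and>
                   (i > j + 1 \<longrightarrow> A $$ (i, j) = 0) \<and>
                   (i \<le> j \<longrightarrow> A $$ (i, j) \<in> P))}"

text \<open>M_n: the maximum of |det A| over G_s^{n x n}([0,t]) (the set is compact and
nonempty, so the supremum is attained); M_0 = 1.\<close>
definition Mmax :: "real \<Rightarrow> real \<Rightarrow> nat \<Rightarrow> real" where
  "Mmax s t n = (if n = 0 then 1 else (SUP A \<in> hess_set s n {0..t}. \<bar>det A\<bar>))"

fun K :: "real \<Rightarrow> real \<Rightarrow> nat \<Rightarrow> real" where
  "K s t 0 = 1"
| "K s t (Suc 0) = t"
| "K s t (Suc (Suc 0)) = t ^ 2"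
| "K s t (Suc (Suc (Suc n))) = t * K s t (Suc (Suc n)) + s ^ 2 * K s t (Suc n)"

end

theory Submission
  imports Defs
begin

(* Expanding the determinant of an upper Hessenberg matrix with subdiagonal s along its last
   row expresses each leading principal minor as D_{k+1} = sum_{i<=k} (-s)^(k-i) a_{ik} D_i.
   The normalised minors d_i = D_i / (-s)^i then satisfy d_{k+1} = - sum_{i<=k} c_i d_i with
   weights c_i = a_{ik} / s in [0, t/s], so a new positive value is at most t/s times the
   negative mass accumulated so far, and vice versa.  By induction, the positive and the
   negative mass are bounded by the consecutive Fibonacci polynomials F_{k+1}(t/s) and
   F_k(t/s), in one order or the other.  Hence |D_n| <= s^n (t/s) F_n(t/s), which is K_n. *)

definition leading_submat :: "'a mat \<Rightarrow> nat \<Rightarrow> 'a mat" where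
  "leading_submat A k = mat k k (\<lambda>ij. A $$ ij)"

lemma leading_submat_carrier [simp]: "leading_submat A k \<in> carrier_mat k k"
  unfolding leading_submat_def by simp

lemma leading_submat_index [simp]:
  "i < k \<Longrightarrow> j < k \<Longrightarrow> leading_submat A k $$ (i, j) = A $$ (i, j)"
  unfolding leading_submat_def by simp

lemma leading_submat_leading_submat [simp]:
  "i \<le> k \<Longrightarrow> leading_submat (leading_submat A k) i = leading_submat A i"
  unfolding leading_submat_def by (rule eq_matI) auto

lemma leading_submat_full: "A \<in> carrier_mat n n \<Longrightarrow> leading_submat A n = A"
  unfolding leading_submat_def by (rule eq_matI) auto

lemma leading_submat_mat_delete:
  assumes "i \<le> r" "i \<le> c" "r < dim_row A" "c < dim_col A"
  shows "leading_submat (mat_delete A r c) i = leading_submat A i"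
  unfolding leading_submat_def mat_delete_def using assms by (intro eq_matI) auto

definition hessenberg_subdiag :: "'a::zero \<Rightarrow> nat \<Rightarrow> 'a mat \<Rightarrow> bool" where
  "hessenberg_subdiag s n A \<longleftrightarrow> A \<in> carrier_mat n n \<and>
     (\<forall>i<n. \<forall>j<n. (i = Suc j \<longrightarrow> A $$ (i, j) = s) \<and> (Suc j < i \<longrightarrow> A $$ (i, j) = 0))"

lemma hess_set_hessenberg_subdiag: "A \<in> hess_set s n P \<Longrightarrow> hessenberg_subdiag s n A"
  unfolding hess_set_def hessenberg_subdiag_def by auto

lemma hessenberg_subdiag_leading_submat:
  "hessenberg_subdiag s n A \<Longrightarrow> k \<le> n \<Longrightarrow> hessenberg_subdiag s k (leading_submat A k)"
  unfolding hessenberg_subdiag_def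
  by (metis leading_submat_carrier leading_submat_index order_less_le_trans)

lemma hessenberg_subdiag_mat_delete:
  assumes "hessenberg_subdiag s (Suc (Suc k)) H"
  shows "hessenberg_subdiag s (Suc k) (mat_delete H (Suc k) k)"
  using assms unfolding hessenberg_subdiag_def mat_delete_def by auto

lemma det_hessenberg_subdiag_last_row:
  fixes H :: "'a::comm_ring_1 mat"
  assumes H: "hessenberg_subdiag s (Suc (Suc k)) H"
  shows "det H = - s * det (mat_delete H (Suc k) k)
                 + H $$ (Suc k, Suc k) * det (leading_submat H (Suc k))"
proof -
  have carrier: "H \<in> carrier_mat (Suc (Suc k)) (Suc (Suc k))"
    using H unfolding hessenberg_subdiag_def by simp
  have "det H = (\<Sum>j<Suc (Suc k). H $$ (Suc k, j) * cofactor H (Suc k) j)"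
    using laplace_expansion_row[OF carrier] by simp
  also have "\<dots> = H $$ (Suc k, k) * cofactor H (Suc k) k
                  + H $$ (Suc k, Suc k) * cofactor H (Suc k) (Suc k)"
    using H unfolding hessenberg_subdiag_def by (simp add: sum.neutral)
  moreover have "mat_delete H (Suc k) (Suc k) = leading_submat H (Suc k)"
    unfolding mat_delete_def leading_submat_def using carrier by (intro eq_matI) auto
  ultimately show ?thesis
    using H unfolding cofactor_def hessenberg_subdiag_def by simp
qed

lemma det_hessenberg_subdiag:
  fixes H :: "'a::comm_ring_1 mat"
  assumes "hessenberg_subdiag s (Suc m) H"
  shows "det H = (\<Sum>i\<le>m. (-s) ^ (m - i) * H $$ (i, m) * det (leading_submat H i))"
  using assms
proof (induction m arbitrary: H)
  case 0
  then show ?case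
    by (simp add: hessenberg_subdiag_def det_single)
next
  case (Suc k)
  define B where "B = mat_delete H (Suc k) k"
  have carrier: "H \<in> carrier_mat (Suc (Suc k)) (Suc (Suc k))"
    using Suc.prems unfolding hessenberg_subdiag_def by simp
  have last_col: "B $$ (i, k) = H $$ (i, Suc k)" if "i \<le> k" for i
    using that carrier unfolding B_def mat_delete_def by simp
  have leading: "leading_submat B i = leading_submat H i" if "i \<le> k" for i
    unfolding B_def using that carrier by (intro leading_submat_mat_delete) auto
  have "- s * det B = (\<Sum>i\<le>k. (-s) ^ (Suc k - i) * H $$ (i, Suc k) * det (leading_submat H i))"
    unfolding Suc.IH[OF hessenberg_subdiag_mat_delete[OF Suc.prems, folded B_def]]
    by (auto simp: sum_distrib_left last_col leading Suc_diff_le intro!: sum.cong)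
  then show ?case
    using det_hessenberg_subdiag_last_row[OF Suc.prems] by (simp add: B_def)
qed

lemma det_hessenberg_subdiag_scaled:
  fixes H :: "'a::field mat"
  assumes H: "hessenberg_subdiag s (Suc m) H" and s: "s \<noteq> 0"
  shows "det H / (-s) ^ Suc m
           = - (\<Sum>i\<le>m. H $$ (i, m) / s * (det (leading_submat H i) / (-s) ^ i))"
  unfolding det_hessenberg_subdiag[OF H] sum_divide_distrib sum_negf[symmetric]
proof (intro sum.cong refl)
  fix i assume "i \<in> {..m}"
  then have "(-s) ^ Suc m = (-s) ^ (m - i) * (-s) ^ i * (-s)"
    by (simp add: power_add[symmetric])
  then show "(-s) ^ (m - i) * H $$ (i, m) * det (leading_submat H i) / (-s) ^ Suc m
               = - (H $$ (i, m) / s * (det (leading_submat H i) / (-s) ^ i))"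
    using s by (simp add: field_simps)
qed

fun fib_poly :: "real \<Rightarrow> nat \<Rightarrow> real" where
  "fib_poly x 0 = 0"
| "fib_poly x (Suc 0) = 1"
| "fib_poly x (Suc (Suc n)) = x * fib_poly x (Suc n) + fib_poly x n"

lemma fib_poly_nonneg_mono:
  assumes "1 \<le> x"
  shows "0 \<le> fib_poly x n \<and> fib_poly x n \<le> fib_poly x (Suc n)"
proof (induction n)
  case (Suc n)
  then have "fib_poly x (Suc n) \<le> x * fib_poly x (Suc n)"
    using assms by (simp add: mult_le_cancel_right1)
  with Suc show ?case by simp
qed simp

definition pos_sum :: "(nat \<Rightarrow> real) \<Rightarrow> nat \<Rightarrow> real" where
  "pos_sum d m = (\<Sum>i\<le>m. max (d i) 0)"

definition neg_sum :: "(nat \<Rightarrow> real) \<Rightarrow> nat \<Rightarrow> real" where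
  "neg_sum d m = (\<Sum>i\<le>m. max (- d i) 0)"

lemma neg_weighted_sum_bounds:
  assumes "\<And>i. i \<le> k \<Longrightarrow> 0 \<le> c i \<and> c i \<le> \<tau>"
  shows "- \<tau> * pos_sum d k \<le> - (\<Sum>i\<le>k. c i * d i)"
    and "- (\<Sum>i\<le>k. c i * d i) \<le> \<tau> * neg_sum d k"
proof -
  have term_bounds: "- \<tau> * max (d i) 0 \<le> - (c i * d i) \<and> - (c i * d i) \<le> \<tau> * max (- d i) 0"
    if "i \<le> k" for i
    using assms[OF that] mult_right_mono[of "c i" \<tau> "d i"] mult_right_mono[of "c i" \<tau> "- d i"]
    by (cases "0 \<le> d i") (auto simp: mult_nonneg_nonpos)
  show "- \<tau> * pos_sum d k \<le> - (\<Sum>i\<le>k. c i * d i)"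
    unfolding pos_sum_def sum_distrib_left sum_negf[symmetric]
    using term_bounds by (intro sum_mono) auto
  show "- (\<Sum>i\<le>k. c i * d i) \<le> \<tau> * neg_sum d k"
    unfolding neg_sum_def sum_distrib_left sum_negf[symmetric]
    using term_bounds by (intro sum_mono) auto
qed

lemma fib_poly_bound_step:
  assumes "1 \<le> \<tau>" "0 \<le> x" "x \<le> \<tau> * N"
    and "(P \<le> fib_poly \<tau> (Suc m) \<and> N \<le> fib_poly \<tau> m)
       \<or> (P \<le> fib_poly \<tau> m \<and> N \<le> fib_poly \<tau> (Suc m))"
  shows "P + x \<le> fib_poly \<tau> (Suc (Suc m)) \<and> N \<le> fib_poly \<tau> (Suc m)"
proof -
  let ?F = "fib_poly \<tau> (Suc m)" and ?G = "fib_poly \<tau> m"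
  have GF: "0 \<le> ?G" "?G \<le> ?F"
    using fib_poly_nonneg_mono[OF assms(1)] by auto
  have "?F + \<tau> * ?G \<le> \<tau> * ?F + ?G"
    using mult_right_mono[of 0 "\<tau> - 1" "?F - ?G"] assms(1) GF by (simp add: algebra_simps)
  moreover have "\<tau> * N \<le> \<tau> * ?G" if "N \<le> ?G"
    using that assms(1) by simp
  moreover have "\<tau> * N \<le> \<tau> * ?F" if "N \<le> ?F"
    using that assms(1) by simp
  ultimately show ?thesis
    using assms(3,4) GF by auto
qed

lemma pos_neg_sum_le_fib_poly:
  assumes \<tau>: "1 \<le> \<tau>" and d0: "d 0 = 1"
    and step: "\<And>k. k < m \<Longrightarrow> - \<tau> * pos_sum d k \<le> d (Suc k) \<and> d (Suc k) \<le> \<tau> * neg_sum d k"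
  shows "(pos_sum d m \<le> fib_poly \<tau> (Suc m) \<and> neg_sum d m \<le> fib_poly \<tau> m)
       \<or> (pos_sum d m \<le> fib_poly \<tau> m \<and> neg_sum d m \<le> fib_poly \<tau> (Suc m))"
  using step
proof (induction m)
  case 0
  then show ?case using d0 by (simp add: pos_sum_def neg_sum_def)
next
  case (Suc m)
  let ?x = "d (Suc m)"
  have IH: "(pos_sum d m \<le> fib_poly \<tau> (Suc m) \<and> neg_sum d m \<le> fib_poly \<tau> m)
          \<or> (pos_sum d m \<le> fib_poly \<tau> m \<and> neg_sum d m \<le> fib_poly \<tau> (Suc m))"
    using Suc by simp
  have bounds: "- \<tau> * pos_sum d m \<le> ?x" "?x \<le> \<tau> * neg_sum d m"
    using Suc.prems[of m] by auto
  show ?case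
  proof (cases "0 \<le> ?x")
    case True
    then have "pos_sum d (Suc m) = pos_sum d m + ?x" "neg_sum d (Suc m) = neg_sum d m"
      by (simp_all add: pos_sum_def neg_sum_def)
    then show ?thesis
      using fib_poly_bound_step[OF \<tau> True bounds(2) IH] by simp
  next
    case False
    then have "pos_sum d (Suc m) = pos_sum d m" "neg_sum d (Suc m) = neg_sum d m + - ?x"
      by (simp_all add: pos_sum_def neg_sum_def)
    moreover have "- ?x \<le> \<tau> * pos_sum d m"
      using bounds(1) by simp
    ultimately show ?thesis
      using fib_poly_bound_step[of \<tau> "- ?x" "pos_sum d m" "neg_sum d m" m] \<tau> False IH by auto
  qed
qed

lemma alternating_recurrence_abs_le:
  assumes \<tau>: "1 \<le> \<tau>" and d0: "d 0 = 1"
    and coeff: "\<And>k i. k \<le> m \<Longrightarrow> i \<le> k \<Longrightarrow> 0 \<le> c k i \<and> c k i \<le> \<tau>"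
    and recurrence: "\<And>k. k \<le> m \<Longrightarrow> d (Suc k) = - (\<Sum>i\<le>k. c k i * d i)"
  shows "\<bar>d (Suc m)\<bar> \<le> \<tau> * fib_poly \<tau> (Suc m)"
proof -
  have step: "- \<tau> * pos_sum d k \<le> d (Suc k) \<and> d (Suc k) \<le> \<tau> * neg_sum d k" if "k \<le> m" for k
    using neg_weighted_sum_bounds[of k "c k" \<tau> d] coeff recurrence that by simp
  have "pos_sum d m \<le> fib_poly \<tau> (Suc m)" "neg_sum d m \<le> fib_poly \<tau> (Suc m)"
    using pos_neg_sum_le_fib_poly[of \<tau> d m, OF \<tau> d0] step fib_poly_nonneg_mono[OF \<tau>, of m] by auto
  then have "\<tau> * pos_sum d m \<le> \<tau> * fib_poly \<tau> (Suc m)" "\<tau> * neg_sum d m \<le> \<tau> * fib_poly \<tau> (Suc m)"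
    using \<tau> by simp_all
  then show ?thesis
    using step[of m] by linarith
qed

lemma K_eq_fib_poly:
  assumes "s \<noteq> 0" "0 < n"
  shows "K s t n = t * s ^ (n - 1) * fib_poly (t / s) n"
  using assms
proof (induction s t n rule: K.induct)
  case (4 s t n)
  let ?F = "fib_poly (t / s)"
  have "K s t (Suc (Suc (Suc n)))
          = t * (t * s ^ Suc n * ?F (Suc (Suc n))) + s\<^sup>2 * (t * s ^ n * ?F (Suc n))"
    using 4 by simp
  also have "\<dots> = t * s ^ Suc (Suc n) * (t / s * ?F (Suc (Suc n)) + ?F (Suc n))"
    using \<open>s \<noteq> 0\<close> by (simp add: field_simps power2_eq_square)
  finally show ?case by simp
qed (simp_all add: power2_eq_square)

lemma abs_det_hess_set_le_K:
  assumes A: "A \<in> hess_set s n {0..t}" and s: "0 < s" "s \<le> t" and "0 < n"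
  shows "\<bar>det A\<bar> \<le> K s t n"
proof -
  obtain m where n: "n = Suc m"
    using \<open>0 < n\<close> gr0_conv_Suc by blast
  define \<tau> where "\<tau> = t / s"
  define d where "d i = det (leading_submat A i) / (-s) ^ i" for i
  have H: "hessenberg_subdiag s n A"
    using A by (rule hess_set_hessenberg_subdiag)
  have \<tau>: "1 \<le> \<tau>"
    unfolding \<tau>_def using s by simp
  have d0: "d 0 = 1"
    by (simp add: d_def)
  have coeff: "0 \<le> A $$ (i, k) / s \<and> A $$ (i, k) / s \<le> \<tau>" if "k \<le> m" "i \<le> k" for k i
    using A that n s unfolding hess_set_def \<tau>_def by (auto simp: divide_right_mono)
  have recurrence: "d (Suc k) = - (\<Sum>i\<le>k. A $$ (i, k) / s * d i)" if "k \<le> m" for k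
    using det_hessenberg_subdiag_scaled[OF hessenberg_subdiag_leading_submat[OF H, of "Suc k"]]
      that n s by (simp add: d_def)
  have "\<bar>det A\<bar> = s ^ n * \<bar>d n\<bar>"
    using H s leading_submat_full[of A n]
    by (simp add: d_def hessenberg_subdiag_def power_abs)
  also have "\<dots> \<le> s ^ n * (\<tau> * fib_poly \<tau> n)"
    using alternating_recurrence_abs_le[of \<tau> d m, OF \<tau> d0 coeff recurrence] n s by simp
  also have "\<dots> = K s t n"
    using K_eq_fib_poly[of s n t] n s by (simp add: \<tau>_def)
  finally show ?thesis .
qed

theorem lemma3p5:
  fixes s t :: real and n :: nat
  assumes "0 < s" and "s \<le> t"
  shows "K s t n \<ge> Mmax s t n"
proof (cases "n = 0")
  case True
  then show ?thesis by (simp add: Mmax_def)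
next
  case False
  have "mat n n (\<lambda>(i, j). if i = Suc j then s else 0) \<in> hess_set s n {0..t}"
    unfolding hess_set_def using assms by auto
  then show ?thesis
    unfolding Mmax_def using False assms abs_det_hess_set_le_K by (auto intro!: cSUP_least)
qed

end
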